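(* The series $\mathfrak{f}_2(z)=\sum_{n\ge0}\frac{-1}{2n-1}\binom{2n}{n}^2z^n$ belongs to $\mathcal{L}^2(\mathcal{P}\setminus\{2\})$, where $\mathcal{P}$ is the set of all primes.
   Context: For a prime $p$, $\mathbb{Z}_{(p)}$ is the localization of $\mathbb{Z}$ at $(p)$; for $f=\sum a(n)z^n\in\mathbb{Z}_{(p)}[[z]]$, $f_{|p}(z)=\sum (a(n)\bmod p)z^n$. The height of a rational function $P/Q$ with $P,Q$ coprime polynomials is $\max(\deg P,\deg Q)$. For an infinite set $\mathcal{S}$ of primes, $\mathcal{L}^2(\mathcal{S})$ is the set of $f\in 1+z\mathbb{Q}[[z]]$ such that there is a constant $C>0$ independent of $p$ with: for every $p\in\mathcal{S}$, $f\in\mathbb{Z}_{(p)}[[z]]$, and there exist an integer $l_p>0$ and $A_p\in\mathbb{F}_p(z)\cap\mathbb{F}_p[[z]]$ with $f_{|p}(z)=A_p(z)f_{|p}(z^{p^{l_p}})$ and height of $A_p$ at most $Cp^{2l_p}$. *)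

theory Defs
  imports "HOL-Computational_Algebra.Computational_Algebra" "HOL-Number_Theory.Number_Theory"
    "Berlekamp_Zassenhaus.Poly_Mod"
begin

definition in_Zloc :: "nat \<Rightarrow> rat \<Rightarrow> bool" where
  "in_Zloc p r \<longleftrightarrow> \<not> int p dvd snd (quotient_of r)"

definition red_mod :: "nat \<Rightarrow> rat \<Rightarrow> int" where
  "red_mod p r = (THE k. 0 \<le> k \<and> k < int p \<and>
      [fst (quotient_of r) = k * snd (quotient_of r)] (mod int p))"

text \<open>f_{|p}, as an integer power series with coefficients in {0..p-1} (representing F_p[[z]]).\<close>
definition fps_red :: "nat \<Rightarrow> rat fps \<Rightarrow> int fps" where
  "fps_red p f = Abs_fps (\<lambda>n. red_mod p (fps_nth f n))"

definition fps_subst_pow :: "nat \<Rightarrow> 'a::zero fps \<Rightarrow> 'a fps" where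
  "fps_subst_pow q g = Abs_fps (\<lambda>n. if q dvd n then fps_nth g (n div q) else 0)"

definition fps_eq_mod :: "nat \<Rightarrow> int fps \<Rightarrow> int fps \<Rightarrow> bool" where
  "fps_eq_mod p F G \<longleftrightarrow> (\<forall>n. [fps_nth F n = fps_nth G n] (mod int p))"

text \<open>A rational function A_p in F_p(z) is given as P/Q with P, Q
  integer polynomials read modulo p, coprime over F_p; A_p lies in F_p[[z]] iff Q(0) is
  nonzero mod p; then f_{|p}(z) = A_p(z) f_{|p}(z^{p^l}) means Q f_{|p}(z) = P f_{|p}(z^{p^l})
  in F_p[[z]]; the height is max(deg P, deg Q) over F_p.\<close>
definition L2 :: "nat set \<Rightarrow> rat fps set" where
  "L2 S = {f. fps_nth f 0 = 1 \<and>
     (\<exists>C::real. C > 0 \<and> (\<forall>p\<in>S.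
        (\<forall>n. in_Zloc p (fps_nth f n)) \<and>
        (\<exists>l::nat. l > 0 \<and> (\<exists>P Q :: int poly.
            poly_mod.coprime_m (int p) P Q \<and>
            poly_mod.M (int p) (Polynomial.coeff Q 0) \<noteq> 0 \<and>
            fps_eq_mod p (fps_of_poly Q * fps_red p f)
                         (fps_of_poly P * fps_subst_pow (p ^ l) (fps_red p f)) \<and>
            real (max (degree (poly_mod.Mp (int p) P)) (degree (poly_mod.Mp (int p) Q)))
              \<le> C * real p ^ (2 * l)))))}"

definition frak_f2 :: "rat fps" where
  "frak_f2 = Abs_fps (\<lambda>n. - 1 / (2 * of_nat n - 1) * of_nat ((2 * n) choose n) ^ 2)"

end

theory Submission
  imports Defs
begin

text \<open>By Lucas' theorem, for a prime \<open>p\<close> and \<open>n = n0 + p m\<close> with \<open>n0 < p\<close>, the numbers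
  \<open>b(n) = binomial(2n,n)^2\<close> satisfy \<open>b(n) = b(n0) b(m)\<close> mod \<open>p\<close>, and since the coefficients
  \<open>a(n)\<close> of \<open>f2\<close> satisfy \<open>(2n - 1) a(n) = - b(n)\<close>, also \<open>a(n) = a(n0) b(m)\<close> mod \<open>p\<close>.
  With \<open>F0, B0\<close> the truncations of these series below \<open>z^p\<close> and \<open>B = \<Sum> b(n) z^n\<close>, this
  reads \<open>f2 = F0(z) B(z^p)\<close> and \<open>B = B0(z) B(z^p)\<close> in \<open>F_p[[z]]\<close>. Eliminating \<open>B\<close> gives
  \<open>F0(z^p) f2(z) = F0(z) B0(z^p) f2(z^p)\<close>, a relation with \<open>l = 1\<close> and height at most
  \<open>2p^2\<close>. Since \<open>F0(0) = 1\<close>, common factors of the two sides modulo \<open>p\<close> can be cancelled,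
  which makes them coprime without raising the height.\<close>

section \<open>Lucas' theorem for central binomial coefficients\<close>

lemma binomial_prime_cong:
  assumes p: "prime (p::nat)"
  shows "[p choose k = (if k = 0 \<or> k = p then 1 else 0)] (mod p)"
proof -
  consider "k = 0 \<or> k = p" | "0 < k \<and> k < p" | "p < k" by linarith
  then show ?thesis
  proof cases
    case 1
    then show ?thesis by auto
  next
    case 2
    then show ?thesis using dvd_choose_prime[of k p] p by (simp add: cong_0_iff)
  next
    case 3
    then show ?thesis by (simp add: binomial_eq_0)
  qed
qed

lemma binomial_add_prime_cong:
  assumes p: "prime (p::nat)"
  shows "[(x + p) choose b = (x choose b) + (if p \<le> b then x choose (b - p) else 0)] (mod p)"
proof -
  have "p > 0" using p prime_gt_0_nat by blast
  have "(x + p) choose b = (\<Sum>k\<le>b. (p choose k) * (x choose (b - k)))"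
    using vandermonde[of p x b] by (simp add: add.commute)
  also have "[\<dots> = (\<Sum>k\<le>b. (if k = 0 \<or> k = p then 1 else 0) * (x choose (b - k)))] (mod p)"
    by (intro cong_sum cong_mult binomial_prime_cong[OF p] cong_refl)
  also have "(\<Sum>k\<le>b. (if k = 0 \<or> k = p then 1 else 0) * (x choose (b - k)))
      = (\<Sum>k\<le>b. (if k = 0 then x choose b else 0) + (if k = p then x choose (b - p) else 0))"
    by (intro sum.cong) (use \<open>p > 0\<close> in auto)
  also have "\<dots> = (x choose b) + (if p \<le> b then x choose (b - p) else 0)"
    by (simp add: sum.distrib)
  finally show ?thesis .
qed

lemma lucas_binomial_cong:
  assumes p: "prime (p::nat)" and "a0 < p" "b0 < p"
  shows "[(a0 + p * a1) choose (b0 + p * b1) = (a0 choose b0) * (a1 choose b1)] (mod p)"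
  using assms(2,3)
proof (induction a1 arbitrary: b1)
  case 0
  show ?case
  proof (cases b1)
    case (Suc c)
    then have "a0 < b0 + p * b1" using 0 by simp
    then show ?thesis using Suc by (simp add: binomial_eq_0)
  qed simp
next
  case (Suc a1)
  have shift: "a0 + p * Suc a1 = (a0 + p * a1) + p" by simp
  show ?case
  proof (cases b1)
    case 0
    have "[(a0 + p * Suc a1) choose b0 = (a0 + p * a1) choose b0] (mod p)"
      using binomial_add_prime_cong[OF p, of "a0 + p * a1" b0] Suc.prems unfolding shift by simp
    also have "[(a0 + p * a1) choose b0 = (a0 choose b0) * (a1 choose 0)] (mod p)"
      using Suc.IH[of 0] Suc.prems by simp
    finally show ?thesis using 0 by simp
  next
    case (Suc c)
    have "[(a0 + p * Suc a1) choose (b0 + p * b1) = ((a0 + p * a1) choose (b0 + p * b1))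
          + ((a0 + p * a1) choose (b0 + p * c))] (mod p)"
      using binomial_add_prime_cong[OF p, of "a0 + p * a1" "b0 + p * b1"] Suc unfolding shift by simp
    also have "[((a0 + p * a1) choose (b0 + p * b1)) + ((a0 + p * a1) choose (b0 + p * c))
       = (a0 choose b0) * (a1 choose b1) + (a0 choose b0) * (a1 choose c)] (mod p)"
      by (intro cong_add Suc.IH) (use Suc.prems in auto)
    also have "(a0 choose b0) * (a1 choose b1) + (a0 choose b0) * (a1 choose c)
       = (a0 choose b0) * (Suc a1 choose b1)"
      using Suc by (simp add: algebra_simps)
    finally show ?thesis .
  qed
qed

lemma central_binomial_cong_0:
  assumes p: "prime (p::nat)" and "n0 < p" "p \<le> 2 * n0"
  shows "[(2 * (n0 + p * m)) choose (n0 + p * m) = 0] (mod p)"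
proof -
  have shift: "2 * (n0 + p * m) = (2 * n0 - p) + p * (2 * m + 1)" using assms(3) by simp
  have "[(2 * n0 - p) + p * (2 * m + 1) choose (n0 + p * m)
         = ((2 * n0 - p) choose n0) * ((2 * m + 1) choose m)] (mod p)"
    by (rule lucas_binomial_cong) (use assms in auto)
  moreover have "(2 * n0 - p) choose n0 = 0" using assms by (intro binomial_eq_0) linarith
  ultimately show ?thesis unfolding shift by simp
qed

lemma central_binomial_digit_cong:
  assumes p: "prime (p::nat)" and "n0 < p"
  shows "[int ((2 * (n0 + p * m)) choose (n0 + p * m)) =
          int ((2 * n0) choose n0) * int ((2 * m) choose m)] (mod int p)"
proof (cases "2 * n0 < p")
  case True
  have "2 * (n0 + p * m) = 2 * n0 + p * (2 * m)" by simp
  then show ?thesis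
    using lucas_binomial_cong[OF p True \<open>n0 < p\<close>, of "2 * m" m]
    by (metis cong_int_iff of_nat_mult)
next
  case False
  then have lhs: "[(2 * (n0 + p * m)) choose (n0 + p * m) = 0] (mod p)"
    and "[(2 * n0) choose n0 = 0] (mod p)"
    using central_binomial_cong_0[OF p \<open>n0 < p\<close>, of m] central_binomial_cong_0[OF p \<open>n0 < p\<close>, of 0]
    by simp_all
  then have "[((2 * n0) choose n0) * ((2 * m) choose m) = 0 * ((2 * m) choose m)] (mod p)"
    by (intro cong_mult cong_refl)
  then have "[(2 * (n0 + p * m)) choose (n0 + p * m) = ((2 * n0) choose n0) * ((2 * m) choose m)] (mod p)"
    using cong_trans[OF lhs cong_sym] by simp
  then show ?thesis by (metis cong_int_iff of_nat_mult)
qed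

definition catalan :: "nat \<Rightarrow> int" where
  "catalan k = int ((2 * k) choose k) - int ((2 * k) choose Suc k)"

lemma central_binomial_Suc_eq_catalan:
  "int ((2 * k + 2) choose Suc k) = 2 * int (2 * k + 1) * catalan k"
proof -
  have below: "Suc k * ((2 * k) choose Suc k) = k * ((2 * k) choose k)"
  proof -
    have "Suc k * ((2 * k) choose Suc k) = (2 * k) * ((2 * k - 1) choose k)"
      by (rule binomial_absorption)
    also have "\<dots> = (2 * k - k) * ((2 * k) choose k)"
      by (rule binomial_absorb_comp[symmetric])
    finally show ?thesis by simp
  qed
  have next_central: "Suc k * ((2 * k + 2) choose Suc k) = 2 * (2 * k + 1) * ((2 * k) choose k)"
  proof -
    have "Suc k * ((2 * k + 2) choose Suc k) = Suc k * (Suc (2 * k + 1) choose Suc k)" by simp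
    also have "\<dots> = Suc (2 * k + 1) * ((2 * k + 1) choose k)" by (rule Suc_times_binomial)
    also have "(2 * k + 1) choose k = (2 * k + 1) choose Suc k"
      using binomial_symmetric[of k "2 * k + 1"] by simp
    also have "Suc (2 * k + 1) * ((2 * k + 1) choose Suc k) = 2 * (Suc k * (Suc (2 * k) choose Suc k))"
      by simp
    also have "Suc k * (Suc (2 * k) choose Suc k) = Suc (2 * k) * ((2 * k) choose k)"
      by (rule Suc_times_binomial)
    finally show ?thesis by simp
  qed
  have "int (Suc k) * (2 * int (2 * k + 1) * catalan k)
      = 2 * int (2 * k + 1) * (int (Suc k * ((2 * k) choose k)) - int (Suc k * ((2 * k) choose Suc k)))"
    unfolding catalan_def of_nat_mult by (simp add: algebra_simps)
  also have "\<dots> = int (Suc k * ((2 * k + 2) choose Suc k))"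
    unfolding below next_central by (simp add: algebra_simps)
  finally show ?thesis by (simp only: of_nat_mult mult_cancel_left) simp
qed

text \<open>The integer form of \<open>- binomial(2n,n)^2 / (2n - 1)\<close>, using
  \<open>binomial(2n,n) / (2n - 1) = 2 catalan(n - 1)\<close>.\<close>
fun f2_coeff :: "nat \<Rightarrow> int" where
  "f2_coeff 0 = 1"
| "f2_coeff (Suc k) = - int ((2 * k + 2) choose Suc k) * (2 * catalan k)"

lemma f2_coeff_mult_odd: "(2 * int n - 1) * f2_coeff n = - (int ((2 * n) choose n) ^ 2)"
proof (cases n)
  case (Suc k)
  have "(2 * int n - 1) * f2_coeff n
      = - int ((2 * k + 2) choose Suc k) * (2 * int (2 * k + 1) * catalan k)"
    using Suc by (simp add: algebra_simps del: binomial_Suc_Suc)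
  also have "\<dots> = - (int ((2 * n) choose n) ^ 2)"
    unfolding central_binomial_Suc_eq_catalan[symmetric] using Suc by (simp add: power2_eq_square del: binomial_Suc_Suc)
  finally show ?thesis .
qed simp

lemma central_binomial_dvd_f2_coeff:
  assumes "n > 0"
  shows "int ((2 * n) choose n) dvd f2_coeff n"
proof -
  obtain k where "n = Suc k" using assms gr0_implies_Suc by blast
  moreover have "2 * Suc k = 2 * k + 2" by simp
  ultimately show ?thesis by (simp del: binomial_Suc_Suc)
qed

lemma frak_f2_nth: "fps_nth frak_f2 n = of_int (f2_coeff n)"
proof -
  have "(2 * of_nat n - 1 :: rat) \<noteq> 0"
  proof
    assume "(2 * of_nat n - 1 :: rat) = 0"
    then have "(of_nat (2 * n) :: rat) = of_nat 1" by simp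
    then show False by (simp only: of_nat_eq_iff) simp
  qed
  moreover have "(2 * of_nat n - 1 :: rat) * of_int (f2_coeff n) = - (of_nat ((2 * n) choose n) ^ 2)"
    using arg_cong[OF f2_coeff_mult_odd[of n], of "of_int :: int \<Rightarrow> rat"] by simp
  ultimately show ?thesis unfolding frak_f2_def by (simp add: field_simps)
qed

definition central_binomial_sq :: "nat \<Rightarrow> int" where
  "central_binomial_sq n = int ((2 * n) choose n) ^ 2"

lemma central_binomial_sq_digit_cong:
  assumes "prime (p::nat)" "m0 < p"
  shows "[central_binomial_sq (m0 + p * k) = central_binomial_sq m0 * central_binomial_sq k] (mod int p)"
  unfolding central_binomial_sq_def power_mult_distrib[symmetric]
  using central_binomial_digit_cong[OF assms] by (rule cong_pow)

lemma f2_coeff_digit_cong: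
  assumes p: "prime (p::nat)" and "n0 < p"
  shows "[f2_coeff (n0 + p * m) = f2_coeff n0 * central_binomial_sq m] (mod int p)"
proof (cases "int p dvd 2 * int n0 - 1")
  case False
  define n where "n = n0 + p * m"
  have "[(2 * int n0 - 1) * f2_coeff n = (2 * int n - 1) * f2_coeff n] (mod int p)"
  proof (intro cong_mult cong_refl)
    have "2 * int n - 1 = (2 * int n0 - 1) + int p * (2 * int m)"
      unfolding n_def by (simp add: algebra_simps)
    then show "[2 * int n0 - 1 = 2 * int n - 1] (mod int p)"
      by (metis cong_sym cong_add_lcancel_0 cong_mult_self_left)
  qed
  also have "(2 * int n - 1) * f2_coeff n = - (int ((2 * n) choose n) ^ 2)"
    by (rule f2_coeff_mult_odd)
  also have "[- (int ((2 * n) choose n) ^ 2)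
      = - ((int ((2 * n0) choose n0) * int ((2 * m) choose m)) ^ 2)] (mod int p)"
    unfolding n_def using central_binomial_digit_cong[OF p \<open>n0 < p\<close>]
    by (intro cong_minus_minus_iff[THEN iffD2] cong_pow)
  also have "- ((int ((2 * n0) choose n0) * int ((2 * m) choose m)) ^ 2)
      = (2 * int n0 - 1) * (f2_coeff n0 * central_binomial_sq m)"
    using f2_coeff_mult_odd[of n0]
    by (simp add: central_binomial_sq_def power_mult_distrib mult.assoc[symmetric])
  finally have "[(2 * int n0 - 1) * f2_coeff n = (2 * int n0 - 1) * (f2_coeff n0 * central_binomial_sq m)] (mod int p)" .
  moreover have "algebraic_semidom_class.coprime (2 * int n0 - 1) (int p)"
    using prime_imp_coprime[of "int p" "2 * int n0 - 1"] False p by (simp add: ac_simps)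
  ultimately show ?thesis unfolding n_def by (simp add: cong_mult_lcancel)
next
  case True
  text \<open>Then \<open>2 n0 - 1 = p\<close>, so \<open>p\<close> divides the central binomial coefficients at \<open>n0\<close> and \<open>n0 + p m\<close>.\<close>
  have "n0 > 0"
  proof (rule ccontr)
    assume "\<not> n0 > 0"
    then have "int p dvd 1" using True by simp
    then show False using p by simp
  qed
  then have "p \<le> 2 * n0" using zdvd_imp_le[OF True] by simp
  then have "int p dvd int ((2 * (n0 + p * m)) choose (n0 + p * m))"
    and "int p dvd int ((2 * n0) choose n0)"
    using central_binomial_cong_0[OF p \<open>n0 < p\<close>, of m] central_binomial_cong_0[OF p \<open>n0 < p\<close>, of 0]
    by (simp_all add: cong_0_iff)
  then have "int p dvd f2_coeff (n0 + p * m)" "int p dvd f2_coeff n0 * central_binomial_sq m"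
    using central_binomial_dvd_f2_coeff[of n0] central_binomial_dvd_f2_coeff[of "n0 + p * m"] \<open>n0 > 0\<close>
    by (auto intro: dvd_trans dvd_mult2)
  then have "[f2_coeff (n0 + p * m) = 0] (mod int p)"
    and "[f2_coeff n0 * central_binomial_sq m = 0] (mod int p)"
    by (simp_all add: cong_0_iff)
  then show ?thesis by (rule cong_trans[OF _ cong_sym])
qed

section \<open>Power series modulo a prime\<close>

lemma fps_eq_mod_refl [simp]: "fps_eq_mod p F F"
  unfolding fps_eq_mod_def by simp

lemma fps_eq_mod_sym: "fps_eq_mod p F G \<Longrightarrow> fps_eq_mod p G F"
  unfolding fps_eq_mod_def by (simp add: cong_sym)

lemma fps_eq_mod_trans [trans]: "fps_eq_mod p F G \<Longrightarrow> fps_eq_mod p G H \<Longrightarrow> fps_eq_mod p F H"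
  unfolding fps_eq_mod_def by (meson cong_trans)

lemma fps_eq_mod_mult:
  "fps_eq_mod p F F' \<Longrightarrow> fps_eq_mod p G G' \<Longrightarrow> fps_eq_mod p (F * G) (F' * G')"
  unfolding fps_eq_mod_def fps_mult_nth by (intro allI cong_sum cong_mult) auto

lemma fps_eq_mod_subst_pow:
  "fps_eq_mod p F G \<Longrightarrow> fps_eq_mod p (fps_subst_pow q F) (fps_subst_pow q G)"
  unfolding fps_eq_mod_def fps_subst_pow_def by auto

lemma fps_eq_mod_of_poly_Mp:
  assumes "poly_mod.Mp (int p) A = poly_mod.Mp (int p) B"
  shows "fps_eq_mod p (fps_of_poly A) (fps_of_poly B)"
  unfolding fps_eq_mod_def fps_of_poly_nth
proof
  fix n
  have "Polynomial.coeff (poly_mod.Mp (int p) A) n = Polynomial.coeff (poly_mod.Mp (int p) B) n"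
    using assms by simp
  then show "[Polynomial.coeff A n = Polynomial.coeff B n] (mod int p)"
    by (simp add: poly_mod.Mp_coeff poly_mod.M_def cong_def)
qed

text \<open>Strong induction on \<open>n\<close>: in the \<open>n\<close>-th coefficient of \<open>h F\<close> only the term
  \<open>h_0 F_n\<close> is not covered by the induction hypothesis, and \<open>h_0\<close> is invertible mod \<open>p\<close>.\<close>
lemma fps_eq_mod_mult_cancel:
  assumes p: "prime (p::nat)" and h0: "\<not> int p dvd fps_nth h 0"
    and eq: "fps_eq_mod p (h * F) (h * G)"
  shows "fps_eq_mod p F G"
  unfolding fps_eq_mod_def
proof
  fix n
  show "[fps_nth F n = fps_nth G n] (mod int p)"
  proof (induction n rule: less_induct)
    case (less n)
    have split: "sum f {0..n} = f 0 + sum f {Suc 0..n}" for f :: "nat \<Rightarrow> int"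
      by (rule sum.atLeast_Suc_atMost) simp
    have "[(\<Sum>i = 0..n. fps_nth h i * fps_nth F (n - i)) = (\<Sum>i = 0..n. fps_nth h i * fps_nth G (n - i))] (mod int p)"
      using eq unfolding fps_eq_mod_def fps_mult_nth by blast
    then have total: "[fps_nth h 0 * fps_nth F n + (\<Sum>i = Suc 0..n. fps_nth h i * fps_nth F (n - i)) =
           fps_nth h 0 * fps_nth G n + (\<Sum>i = Suc 0..n. fps_nth h i * fps_nth G (n - i))] (mod int p)"
      by (simp only: split diff_zero)
    have lower: "[(\<Sum>i = Suc 0..n. fps_nth h i * fps_nth F (n - i)) = (\<Sum>i = Suc 0..n. fps_nth h i * fps_nth G (n - i))] (mod int p)"
      by (intro cong_sum cong_mult cong_refl less.IH) auto
    have "[fps_nth h 0 * fps_nth F n + (\<Sum>i = Suc 0..n. fps_nth h i * fps_nth G (n - i)) =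
           fps_nth h 0 * fps_nth G n + (\<Sum>i = Suc 0..n. fps_nth h i * fps_nth G (n - i))] (mod int p)"
      using cong_trans[OF cong_add[OF cong_refl cong_sym[OF lower]] total] .
    then have "[fps_nth h 0 * fps_nth F n = fps_nth h 0 * fps_nth G n] (mod int p)"
      by (simp add: cong_add_rcancel)
    moreover have "algebraic_semidom_class.coprime (fps_nth h 0) (int p)"
      using prime_imp_coprime[of "int p" "fps_nth h 0"] p h0 by (simp add: ac_simps)
    ultimately show ?case by (simp add: cong_mult_lcancel)
  qed
qed

lemma fps_subst_pow_eq_compose:
  fixes g :: "'a::comm_ring_1 fps"
  assumes "q > 0"
  shows "fps_subst_pow q g = g oo fps_X ^ q"
proof (rule fps_ext)
  fix n
  have "fps_nth (g oo fps_X ^ q) n = (\<Sum>i = 0..n. if i = n div q then (if q dvd n then fps_nth g (n div q) else 0) else 0)"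
    unfolding fps_compose_nth power_mult[symmetric]
    by (intro sum.cong) (use assms in auto)
  also have "\<dots> = fps_nth (fps_subst_pow q g) n"
    unfolding fps_subst_pow_def by (subst sum.delta) (auto simp: div_le_dividend)
  finally show "fps_nth (fps_subst_pow q g) n = fps_nth (g oo fps_X ^ q) n" ..
qed

lemma fps_subst_pow_mult:
  fixes f g :: "'a::idom fps"
  assumes "q > 0"
  shows "fps_subst_pow q (f * g) = fps_subst_pow q f * fps_subst_pow q g"
  unfolding fps_subst_pow_eq_compose[OF assms] using assms by (intro fps_compose_mult_distrib) simp

lemma fps_of_poly_pcompose_monom:
  fixes F :: "'a::idom poly"
  assumes "q > 0"
  shows "fps_of_poly (pcompose F (Polynomial.monom 1 q)) = fps_subst_pow q (fps_of_poly F)"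
  unfolding fps_subst_pow_eq_compose[OF assms] using assms
  by (subst fps_of_poly_pcompose) (simp_all add: fps_of_poly_monom')

lemma fps_of_poly_Poly_mult_subst_pow_nth:
  fixes c :: "nat \<Rightarrow> 'a::comm_semiring_1" and G :: "'a fps"
  assumes "p > 0"
  shows "fps_nth (fps_of_poly (Poly (map c [0..<p])) * fps_subst_pow p G) n = c (n mod p) * fps_nth G (n div p)"
proof -
  have digit: "i < p \<and> p dvd (n - i) \<longleftrightarrow> i = n mod p" if "i \<le> n" for i
  proof
    assume i: "i < p \<and> p dvd (n - i)"
    have "n mod p = ((n - i) + i) mod p" using that by simp
    then show "i = n mod p" using i by (simp add: mod_add_left_eq[symmetric])
  qed (simp add: assms minus_mod_eq_mult_div)
  have "fps_nth (fps_of_poly (Poly (map c [0..<p])) * fps_subst_pow p G) n =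
     (\<Sum>i = 0..n. if i = n mod p then c (n mod p) * fps_nth G (n div p) else 0)"
    unfolding fps_mult_nth fps_subst_pow_def fps_of_poly_nth
  proof (intro sum.cong refl)
    fix i assume "i \<in> {0..n}"
    then show "Polynomial.coeff (Poly (map c [0..<p])) i * fps_nth (Abs_fps (\<lambda>n. if p dvd n then fps_nth G (n div p) else 0)) (n - i)
        = (if i = n mod p then c (n mod p) * fps_nth G (n div p) else 0)"
      using digit[of i] by (auto simp: nth_default_def minus_mod_eq_mult_div)
  qed
  also have "\<dots> = c (n mod p) * fps_nth G (n div p)"
    by (subst sum.delta) (auto simp: mod_le_divisor)
  finally show ?thesis .
qed

lemma fps_eq_mod_digit_factor:
  assumes "p > 0" and digit_cong: "\<And>n0 m. n0 < p \<Longrightarrow> [a (n0 + p * m) = a n0 * b m] (mod int p)"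
  shows "fps_eq_mod p (Abs_fps a) (fps_of_poly (Poly (map a [0..<p])) * fps_subst_pow p (Abs_fps b))"
  unfolding fps_eq_mod_def fps_of_poly_Poly_mult_subst_pow_nth[OF \<open>p > 0\<close>]
proof
  fix n
  have "a n = a (n mod p + p * (n div p))" by simp
  then show "[fps_nth (Abs_fps a) n = a (n mod p) * fps_nth (Abs_fps b) (n div p)] (mod int p)"
    using digit_cong[of "n mod p" "n div p"] \<open>p > 0\<close> by simp
qed

lemma in_Zloc_of_int: "p > 1 \<Longrightarrow> in_Zloc p (of_int k)"
  unfolding in_Zloc_def by (simp add: of_int_rat quotient_of_Fract)

lemma red_mod_of_int:
  assumes "p > 1"
  shows "red_mod p (of_int k) = k mod int p"
  unfolding red_mod_def using assms
  by (intro the_equality) (auto simp: of_int_rat quotient_of_Fract cong_def)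

lemma fps_red_frak_f2: "p > 1 \<Longrightarrow> fps_eq_mod p (fps_red p frak_f2) (Abs_fps f2_coeff)"
  unfolding fps_eq_mod_def fps_red_def frak_f2_nth by (simp add: red_mod_of_int cong_def)

section \<open>Cancelling common factors modulo a prime\<close>

lemma (in poly_mod_prime) dvdm_one_if_degree_0:
  assumes "degree (Mp h) = 0" and "M (Polynomial.coeff h 0) \<noteq> 0"
  shows "h dvdm 1"
proof -
  define c where "c = M (Polynomial.coeff h 0)"
  have hc: "Mp h = [:c:]"
    using assms(1) unfolding c_def by (metis Mp_coeff degree_0_id)
  have "c \<noteq> 0" "0 \<le> c" "c < p"
    using assms(2) m1 unfolding c_def M_def by simp_all
  then have "\<not> p dvd c" by (auto dest: zdvd_imp_le)
  then have coprime: "algebraic_semidom_class.coprime c p"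
    using prime_imp_coprime[OF prime] by (simp add: ac_simps)
  have "comm_monoid_mult_class.coprime c p"
    by (rule comm_monoid_mult_class.coprimeI) (use coprime coprime_common_divisor in blast)
  then have inverse: "M (inverse_mod c p * c) = 1" by (rule inverse_mod_coprime[OF prime])
  show ?thesis unfolding dvdm_def
  proof (intro exI[of _ "[:inverse_mod c p:]"])
    have "Mp (h * [:inverse_mod c p:]) = Mp (Mp h * [:inverse_mod c p:])" by simp
    also have "\<dots> = [:M (inverse_mod c p * c):]"
      unfolding hc by (simp add: Mp_const_poly M_def mult.commute)
    also have "\<dots> = 1"
      unfolding inverse by simp
    finally show "Mp 1 = Mp (h * [:inverse_mod c p:])" by simp
  qed
qed

text \<open>A common factor of \<open>P0\<close> and \<open>Q0\<close> has a unit constant term because \<open>Q0\<close> has; being a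
  non-unit, it therefore has positive degree.\<close>
lemma (in poly_mod_prime) common_factor_decompose:
  assumes Q0: "M (Polynomial.coeff Q0 0) \<noteq> 0"
    and "h dvdm P0" "h dvdm Q0" and h_nonunit: "\<not> h dvdm 1"
  obtains P' Q' where "Mp P0 = Mp (h * P')" "Mp Q0 = Mp (h * Q')"
    and "\<not> p dvd Polynomial.coeff h 0" "M (Polynomial.coeff Q' 0) \<noteq> 0"
    and "degree (Mp P') + degree (Mp Q') < degree (Mp P0) + degree (Mp Q0)"
proof -
  obtain P'' Q' where P'': "Mp P0 = Mp (h * P'')" and Q': "Mp Q0 = Mp (h * Q')"
    using \<open>h dvdm P0\<close> \<open>h dvdm Q0\<close> unfolding dvdm_def by blast
  have "M (Polynomial.coeff Q0 0) = M (Polynomial.coeff h 0 * Polynomial.coeff Q' 0)"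
    using arg_cong[OF Q', of "\<lambda>f. Polynomial.coeff f 0"] by (simp add: Mp_coeff coeff_mult_0)
  then have "\<not> p dvd Polynomial.coeff h 0 * Polynomial.coeff Q' 0"
    using Q0 unfolding M_def by (simp add: dvd_eq_mod_eq_0)
  then have h0: "\<not> p dvd Polynomial.coeff h 0" and Q'0: "M (Polynomial.coeff Q' 0) \<noteq> 0"
    unfolding M_def by (auto simp: dvd_eq_mod_eq_0)
  have "Mp Q0 \<noteq> 0"
    using Q0 by (metis Mp_coeff coeff_0)
  then have degQ: "degree (Mp Q0) = degree (Mp h) + degree (Mp Q')"
    using degree_m_eq_prime[of "Mp Q0" h Q'] Q' prime by simp
  have "degree (Mp h) > 0"
    using dvdm_one_if_degree_0[of h] h_nonunit h0 unfolding M_def by (auto simp: dvd_eq_mod_eq_0)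
  obtain P' where P': "Mp P0 = Mp (h * P')" and degP: "degree (Mp P') \<le> degree (Mp P0)"
  proof (cases "Mp P0 = 0")
    case True
    then show ?thesis using that[of 0] by simp
  next
    case False
    then have "degree (Mp P0) = degree (Mp h) + degree (Mp P'')"
      using degree_m_eq_prime[of "Mp P0" h P''] P'' prime by simp
    then show ?thesis using that[of P''] P'' by simp
  qed
  show ?thesis
    using that[OF P' Q' h0 Q'0] degQ \<open>degree (Mp h) > 0\<close> degP by simp
qed

lemma fps_eq_mod_cancel_common_factor:
  fixes F G :: "int fps"
  assumes p: "prime (p::nat)"
    and Q0: "poly_mod.M (int p) (Polynomial.coeff Q0 0) \<noteq> 0"
    and rel: "fps_eq_mod p (fps_of_poly Q0 * F) (fps_of_poly P0 * G)"
    and not_coprime: "\<not> poly_mod.coprime_m (int p) P0 Q0"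
  obtains P Q where "poly_mod.M (int p) (Polynomial.coeff Q 0) \<noteq> 0"
    and "fps_eq_mod p (fps_of_poly Q * F) (fps_of_poly P * G)"
    and "degree (poly_mod.Mp (int p) P) + degree (poly_mod.Mp (int p) Q) <
         degree (poly_mod.Mp (int p) P0) + degree (poly_mod.Mp (int p) Q0)"
proof -
  interpret poly_mod_prime "int p" by unfold_locales (use p in simp)
  obtain h where "h dvdm P0" and "h dvdm Q0" and "\<not> h dvdm 1"
    using not_coprime unfolding coprime_m_def by blast
  then obtain P' Q' where P': "Mp P0 = Mp (h * P')" and Q': "Mp Q0 = Mp (h * Q')"
    and h0: "\<not> int p dvd Polynomial.coeff h 0" and Q'0: "M (Polynomial.coeff Q' 0) \<noteq> 0"
    and lt: "degree (Mp P') + degree (Mp Q') < degree (Mp P0) + degree (Mp Q0)"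
    using common_factor_decompose[OF Q0] by blast
  have "fps_eq_mod p (fps_of_poly h * (fps_of_poly Q' * F)) (fps_of_poly (h * Q') * F)"
    by (simp add: fps_of_poly_mult mult.assoc)
  also have "fps_eq_mod p \<dots> (fps_of_poly Q0 * F)"
    using Q' by (intro fps_eq_mod_mult fps_eq_mod_refl fps_eq_mod_of_poly_Mp) simp
  also have "fps_eq_mod p \<dots> (fps_of_poly P0 * G)" by (rule rel)
  also have "fps_eq_mod p \<dots> (fps_of_poly (h * P') * G)"
    using P' by (intro fps_eq_mod_mult fps_eq_mod_refl fps_eq_mod_of_poly_Mp) simp
  also have "fps_of_poly (h * P') * G = fps_of_poly h * (fps_of_poly P' * G)"
    by (simp add: fps_of_poly_mult mult.assoc)
  finally have "fps_eq_mod p (fps_of_poly h * (fps_of_poly Q' * F)) (fps_of_poly h * (fps_of_poly P' * G))" .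
  then have "fps_eq_mod p (fps_of_poly Q' * F) (fps_of_poly P' * G)"
    by (rule fps_eq_mod_mult_cancel[OF p, rotated]) (simp add: h0)
  then show ?thesis using that Q'0 lt by blast
qed

lemma fps_eq_mod_coprime_relation:
  fixes F G :: "int fps"
  assumes p: "prime (p::nat)"
    and "poly_mod.M (int p) (Polynomial.coeff Q0 0) \<noteq> 0"
    and "fps_eq_mod p (fps_of_poly Q0 * F) (fps_of_poly P0 * G)"
  shows "\<exists>P Q. poly_mod.coprime_m (int p) P Q \<and> poly_mod.M (int p) (Polynomial.coeff Q 0) \<noteq> 0 \<and>
       fps_eq_mod p (fps_of_poly Q * F) (fps_of_poly P * G) \<and>
       degree (poly_mod.Mp (int p) P) + degree (poly_mod.Mp (int p) Q) \<le>
       degree (poly_mod.Mp (int p) P0) + degree (poly_mod.Mp (int p) Q0)"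
  using assms(2,3)
proof (induction "degree (poly_mod.Mp (int p) P0) + degree (poly_mod.Mp (int p) Q0)"
    arbitrary: P0 Q0 rule: less_induct)
  case less
  show ?case
  proof (cases "poly_mod.coprime_m (int p) P0 Q0")
    case True
    then show ?thesis using less.prems by blast
  next
    case False
    obtain P' Q' where "poly_mod.M (int p) (Polynomial.coeff Q' 0) \<noteq> 0"
      and "fps_eq_mod p (fps_of_poly Q' * F) (fps_of_poly P' * G)"
      and lt: "degree (poly_mod.Mp (int p) P') + degree (poly_mod.Mp (int p) Q') <
         degree (poly_mod.Mp (int p) P0) + degree (poly_mod.Mp (int p) Q0)"
      using fps_eq_mod_cancel_common_factor[OF p less.prems False] by blast
    from less.hyps[OF lt this(1,2)] obtain P Q where
      "poly_mod.coprime_m (int p) P Q" "poly_mod.M (int p) (Polynomial.coeff Q 0) \<noteq> 0"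
      "fps_eq_mod p (fps_of_poly Q * F) (fps_of_poly P * G)"
      "degree (poly_mod.Mp (int p) P) + degree (poly_mod.Mp (int p) Q) \<le>
       degree (poly_mod.Mp (int p) P') + degree (poly_mod.Mp (int p) Q')"
      by blast
    then show ?thesis using lt by (intro exI[of _ P] exI[of _ Q]) auto
  qed
qed

lemma fps_eq_mod_eliminate_subst:
  fixes F B :: "int fps" and F0 B0 :: "int poly"
  assumes "p > 0"
    and F: "fps_eq_mod p F (fps_of_poly F0 * fps_subst_pow p B)"
    and B: "fps_eq_mod p B (fps_of_poly B0 * fps_subst_pow p B)"
  shows "fps_eq_mod p (fps_of_poly (pcompose F0 (Polynomial.monom 1 p)) * F)
    (fps_of_poly (F0 * pcompose B0 (Polynomial.monom 1 p)) * fps_subst_pow p F)"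
proof -
  let ?S = "fps_subst_pow p"
  let ?F0 = "fps_of_poly F0" and ?B0 = "fps_of_poly B0"
  have SB: "fps_eq_mod p (?S B) (?S ?B0 * ?S (?S B))"
    using fps_eq_mod_subst_pow[OF B, of p] unfolding fps_subst_pow_mult[OF \<open>p > 0\<close>] .
  have SF: "fps_eq_mod p (?S F) (?S ?F0 * ?S (?S B))"
    using fps_eq_mod_subst_pow[OF F, of p] unfolding fps_subst_pow_mult[OF \<open>p > 0\<close>] .
  have "fps_eq_mod p (?S ?F0 * F) (?S ?F0 * (?F0 * ?S B))"
    using F by (intro fps_eq_mod_mult fps_eq_mod_refl)
  also have "fps_eq_mod p \<dots> (?S ?F0 * (?F0 * (?S ?B0 * ?S (?S B))))"
    using SB by (intro fps_eq_mod_mult fps_eq_mod_refl)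
  also have "\<dots> = ?F0 * ?S ?B0 * (?S ?F0 * ?S (?S B))"
    by (simp add: mult_ac)
  also have "fps_eq_mod p \<dots> (?F0 * ?S ?B0 * ?S F)"
    using fps_eq_mod_sym[OF SF] by (intro fps_eq_mod_mult fps_eq_mod_refl)
  finally show ?thesis
    by (simp add: fps_of_poly_pcompose_monom[OF \<open>p > 0\<close>] fps_of_poly_mult)
qed

lemma degree_Poly_map_upt_le: "degree (Poly (map c [0..<p])) \<le> p - 1"
  by (rule degree_le) (auto simp: nth_default_def)

lemma degree_pcompose_monom_le:
  "degree (pcompose (F :: 'a::idom poly) (Polynomial.monom 1 q)) \<le> degree F * q"
  using degree_pcompose_le[of F "Polynomial.monom 1 q"] by (simp add: degree_monom_eq)

lemma frak_f2_mod_relation: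
  assumes p: "prime p"
  obtains P Q :: "int poly" where "poly_mod.M (int p) (Polynomial.coeff Q 0) \<noteq> 0"
    and "fps_eq_mod p (fps_of_poly Q * fps_red p frak_f2) (fps_of_poly P * fps_subst_pow p (fps_red p frak_f2))"
    and "degree (poly_mod.Mp (int p) P) + degree (poly_mod.Mp (int p) Q) \<le> 2 * p ^ 2"
proof -
  have "p > 1" using p prime_gt_1_nat by blast
  define F0 where "F0 = Poly (map f2_coeff [0..<p])"
  define B0 where "B0 = Poly (map central_binomial_sq [0..<p])"
  define Q where "Q = pcompose F0 (Polynomial.monom 1 p)"
  define P where "P = F0 * pcompose B0 (Polynomial.monom 1 p)"
  have "fps_eq_mod p (Abs_fps f2_coeff) (fps_of_poly F0 * fps_subst_pow p (Abs_fps central_binomial_sq))"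
    unfolding F0_def using \<open>p > 1\<close> f2_coeff_digit_cong[OF p]
    by (intro fps_eq_mod_digit_factor) simp_all
  then have "fps_eq_mod p (fps_red p frak_f2) (fps_of_poly F0 * fps_subst_pow p (Abs_fps central_binomial_sq))"
    by (rule fps_eq_mod_trans[OF fps_red_frak_f2[OF \<open>p > 1\<close>]])
  moreover have "fps_eq_mod p (Abs_fps central_binomial_sq)
      (fps_of_poly B0 * fps_subst_pow p (Abs_fps central_binomial_sq))"
    unfolding B0_def using \<open>p > 1\<close> central_binomial_sq_digit_cong[OF p]
    by (intro fps_eq_mod_digit_factor) simp_all
  ultimately have rel: "fps_eq_mod p (fps_of_poly Q * fps_red p frak_f2)
      (fps_of_poly P * fps_subst_pow p (fps_red p frak_f2))"
    unfolding P_def Q_def using \<open>p > 1\<close> by (intro fps_eq_mod_eliminate_subst) simp_all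
  have "Polynomial.coeff Q 0 = 1"
    using \<open>p > 1\<close> unfolding Q_def F0_def
    by (simp add: poly_0_coeff_0 nth_default_def)
  then have "poly_mod.M (int p) (Polynomial.coeff Q 0) \<noteq> 0"
    using \<open>p > 1\<close> by (simp add: poly_mod.M_def)
  moreover have "degree (poly_mod.Mp (int p) P) + degree (poly_mod.Mp (int p) Q) \<le> 2 * p ^ 2"
  proof -
    have "degree F0 \<le> p - 1" "degree B0 \<le> p - 1"
      unfolding F0_def B0_def by (rule degree_Poly_map_upt_le)+
    then have "degree Q \<le> (p - 1) * p" "degree P \<le> (p - 1) + (p - 1) * p"
      unfolding P_def Q_def
      using degree_pcompose_monom_le[of F0 p] degree_pcompose_monom_le[of B0 p]
        degree_mult_le[of F0 "pcompose B0 (Polynomial.monom 1 p)"]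
      by (meson add_le_mono le_trans mult_le_mono1)+
    moreover have "(p - 1) + (p - 1) * p + (p - 1) * p \<le> 2 * p ^ 2"
      by (cases p) (simp_all add: algebra_simps power2_eq_square)
    ultimately show ?thesis
      using poly_mod.degree_m_le[of "int p" P] poly_mod.degree_m_le[of "int p" Q] by linarith
  qed
  ultimately show ?thesis using that rel by blast
qed

lemma L2_intro:
  fixes C :: real
  assumes "fps_nth f 0 = 1" and "C > 0"
    and prime: "\<And>p. p \<in> S \<Longrightarrow> prime p"
    and "\<And>p n. p \<in> S \<Longrightarrow> in_Zloc p (fps_nth f n)"
    and relation: "\<And>p. p \<in> S \<Longrightarrow> \<exists>l > 0. \<exists>P Q.
      poly_mod.M (int p) (Polynomial.coeff Q 0) \<noteq> 0 \<and>
      fps_eq_mod p (fps_of_poly Q * fps_red p f) (fps_of_poly P * fps_subst_pow (p ^ l) (fps_red p f)) \<and>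
      real (degree (poly_mod.Mp (int p) P) + degree (poly_mod.Mp (int p) Q)) \<le> C * real p ^ (2 * l)"
  shows "f \<in> L2 S"
  unfolding L2_def
proof (intro CollectI conjI exI[of _ C] ballI)
  fix p assume "p \<in> S"
  then obtain l P0 Q0 where "l > 0" and Q0: "poly_mod.M (int p) (Polynomial.coeff Q0 0) \<noteq> 0"
    and rel: "fps_eq_mod p (fps_of_poly Q0 * fps_red p f) (fps_of_poly P0 * fps_subst_pow (p ^ l) (fps_red p f))"
    and deg0: "real (degree (poly_mod.Mp (int p) P0) + degree (poly_mod.Mp (int p) Q0)) \<le> C * real p ^ (2 * l)"
    using relation by blast
  then obtain P Q where "poly_mod.coprime_m (int p) P Q" "poly_mod.M (int p) (Polynomial.coeff Q 0) \<noteq> 0"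
    "fps_eq_mod p (fps_of_poly Q * fps_red p f) (fps_of_poly P * fps_subst_pow (p ^ l) (fps_red p f))"
    and deg: "degree (poly_mod.Mp (int p) P) + degree (poly_mod.Mp (int p) Q) \<le>
       degree (poly_mod.Mp (int p) P0) + degree (poly_mod.Mp (int p) Q0)"
    using fps_eq_mod_coprime_relation[OF prime[OF \<open>p \<in> S\<close>] Q0 rel] by blast
  moreover have "real (max (degree (poly_mod.Mp (int p) P)) (degree (poly_mod.Mp (int p) Q))) \<le> C * real p ^ (2 * l)"
    using deg deg0 by linarith
  ultimately show "\<exists>l > 0. \<exists>P Q. poly_mod.coprime_m (int p) P Q \<and>
      poly_mod.M (int p) (Polynomial.coeff Q 0) \<noteq> 0 \<and>
      fps_eq_mod p (fps_of_poly Q * fps_red p f) (fps_of_poly P * fps_subst_pow (p ^ l) (fps_red p f)) \<and>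
      real (max (degree (poly_mod.Mp (int p) P)) (degree (poly_mod.Mp (int p) Q))) \<le> C * real p ^ (2 * l)"
    using \<open>l > 0\<close> by blast
qed (use assms in auto)

theorem mainTheorem18:
  shows "frak_f2 \<in> L2 ({p. prime p} - {2})"
proof (rule L2_intro[where C = 2])
  fix p :: nat assume "p \<in> {p. prime p} - {2}"
  then obtain P Q where "poly_mod.M (int p) (Polynomial.coeff Q 0) \<noteq> 0"
    and "fps_eq_mod p (fps_of_poly Q * fps_red p frak_f2) (fps_of_poly P * fps_subst_pow p (fps_red p frak_f2))"
    and deg: "degree (poly_mod.Mp (int p) P) + degree (poly_mod.Mp (int p) Q) \<le> 2 * p ^ 2"
    using frak_f2_mod_relation by blast
  moreover have "real (degree (poly_mod.Mp (int p) P) + degree (poly_mod.Mp (int p) Q)) \<le> 2 * real p ^ 2"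
    using of_nat_mono[OF deg] by simp
  ultimately show "\<exists>l > 0. \<exists>P Q. poly_mod.M (int p) (Polynomial.coeff Q 0) \<noteq> 0 \<and>
      fps_eq_mod p (fps_of_poly Q * fps_red p frak_f2)
        (fps_of_poly P * fps_subst_pow (p ^ l) (fps_red p frak_f2)) \<and>
      real (degree (poly_mod.Mp (int p) P) + degree (poly_mod.Mp (int p) Q)) \<le> 2 * real p ^ (2 * l)"
    by (intro exI[of _ 1] exI[of _ P] exI[of _ Q] conjI) auto
qed (auto simp: frak_f2_nth intro: in_Zloc_of_int prime_gt_1_nat)

end
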